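(* Suppose that $\mathbf P\big(\min(\eta(X),1-\eta(X))\le\varepsilon\big)>0$ for every $\varepsilon>0$. Then, for any choice of the thresholds $\tau_\gamma$ (as described below), $\lim_{\gamma\to1^-}\tau_\gamma=1$, and $\mathcal R^*:=\lim_{\gamma\to1^-}\mathcal R(\gamma)=0$.
   Context: Setup (binary classification with indecisions). $(\mathcal X,\mathcal U)$ is a measurable space with a $\sigma$-finite measure $\mu$; $P_1\neq P_2$ are probability measures with densities $f_1,f_2$ w.r.t. $\mu$; $p_1,p_2>0$, $p_1+p_2=1$; $\mathbf P(Y=i)=p_i$ and given $Y=i$, $X\sim P_i$. A classifier is a measurable $\tilde Y(X,U)\in\{0,1,2\}$ with $U\sim\mathrm{Unif}[0,1]$ independent of $(X,Y)$; $0$ means indecision. $\eta(x)=\frac{p_1f_1(x)}{p_1f_1(x)+p_2f_2(x)}$. $\mathcal R(\gamma):=\inf\mathbf P(\tilde Y\neq Y\mid\tilde Y\neq0)$ over classifiers with $\mathbf P(\tilde Y=0)=\gamma$; $\gamma\mapsto\mathcal R(\gamma)$ is non-increasing and nonnegative on $[0,1)$. For $\gamma\in[0,1)$, $\tau_\gamma\in[1/2,1]$ denotes a threshold for which there is a classifier $Y^*_\gamma$ with $\mathbf P(Y^*_\gamma=0)=\gamma$, a.s. $\{1-\tau_\gamma<\eta(X)<\tau_\gamma\}\subset\{Y^*_\gamma=0\}\subset\{1-\tau_\gamma\le\eta(X)\le\tau_\gamma\}$, and $Y^*_\gamma=\arg\max_i p_if_i(X)$ on $\{Y^*_\gamma\neq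 0\}$; such $Y^*_\gamma$ attains $\mathcal R(\gamma)$. *)

theory Defs
  imports "HOL-Analysis.Analysis"
begin

text \<open>Joint law of ((X,U),Y): X given Y=i has density f_i w.r.t. M, P(Y=i)=p_i,
  U uniform on [0,1] independent of (X,Y).  Labels Y in {1,2} (nat).\<close>
definition joint :: "'a measure \<Rightarrow> ('a \<Rightarrow> real) \<Rightarrow> ('a \<Rightarrow> real) \<Rightarrow> real \<Rightarrow> real
    \<Rightarrow> (('a \<times> real) \<times> nat) measure" where
  "joint M f1 f2 p1 p2 =
     density ((M \<Otimes>\<^sub>M lborel) \<Otimes>\<^sub>M count_space {1,2})
       (\<lambda>((x,u),i). ennreal (indicator {0..1} u * (if i = 1 then p1 * f1 x else p2 * f2 x)))"

definition eta :: "('a \<Rightarrow> real) \<Rightarrow> ('a \<Rightarrow> real) \<Rightarrow> real \<Rightarrow> real \<Rightarrow> 'a \<Rightarrow> real" where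
  "eta f1 f2 p1 p2 x = p1 * f1 x / (p1 * f1 x + p2 * f2 x)"

text \<open>A (randomised) classifier: measurable function of (X,U) with values in {0,1,2};
  0 means indecision.\<close>
definition is_classifier :: "'a measure \<Rightarrow> ('a \<times> real \<Rightarrow> nat) \<Rightarrow> bool" where
  "is_classifier M g \<longleftrightarrow> g \<in> measurable (M \<Otimes>\<^sub>M lborel) (count_space UNIV) \<and> (\<forall>z. g z \<in> {0,1,2})"

definition indec_prob :: "'a measure \<Rightarrow> ('a \<Rightarrow> real) \<Rightarrow> ('a \<Rightarrow> real) \<Rightarrow> real \<Rightarrow> real
    \<Rightarrow> ('a \<times> real \<Rightarrow> nat) \<Rightarrow> real" where
  "indec_prob M f1 f2 p1 p2 g =
     measure (joint M f1 f2 p1 p2) {\<omega> \<in> space (joint M f1 f2 p1 p2). g (fst \<omega>) = 0}"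

definition cond_err :: "'a measure \<Rightarrow> ('a \<Rightarrow> real) \<Rightarrow> ('a \<Rightarrow> real) \<Rightarrow> real \<Rightarrow> real
    \<Rightarrow> ('a \<times> real \<Rightarrow> nat) \<Rightarrow> real" where
  "cond_err M f1 f2 p1 p2 g =
     measure (joint M f1 f2 p1 p2) {\<omega> \<in> space (joint M f1 f2 p1 p2). g (fst \<omega>) \<noteq> snd \<omega> \<and> g (fst \<omega>) \<noteq> 0}
   / measure (joint M f1 f2 p1 p2) {\<omega> \<in> space (joint M f1 f2 p1 p2). g (fst \<omega>) \<noteq> 0}"

definition risk :: "'a measure \<Rightarrow> ('a \<Rightarrow> real) \<Rightarrow> ('a \<Rightarrow> real) \<Rightarrow> real \<Rightarrow> real \<Rightarrow> real \<Rightarrow> real" where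
  "risk M f1 f2 p1 p2 \<gamma> =
     Inf {cond_err M f1 f2 p1 p2 g | g. is_classifier M g \<and> indec_prob M f1 f2 p1 p2 g = \<gamma>}"

definition is_threshold :: "'a measure \<Rightarrow> ('a \<Rightarrow> real) \<Rightarrow> ('a \<Rightarrow> real) \<Rightarrow> real \<Rightarrow> real
    \<Rightarrow> real \<Rightarrow> real \<Rightarrow> bool" where
  "is_threshold M f1 f2 p1 p2 \<gamma> t \<longleftrightarrow> 1/2 \<le> t \<and> t \<le> 1 \<and>
     (\<exists>g. is_classifier M g \<and> indec_prob M f1 f2 p1 p2 g = \<gamma> \<and>
        (AE \<omega> in joint M f1 f2 p1 p2.
           let x = fst (fst \<omega>); e = eta f1 f2 p1 p2 x in
           ((1 - t < e \<and> e < t) \<longrightarrow> g (fst \<omega>) = 0) \<and>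
           (g (fst \<omega>) = 0 \<longrightarrow> (1 - t \<le> e \<and> e \<le> t)) \<and>
           (g (fst \<omega>) = 1 \<longrightarrow> p2 * f2 x \<le> p1 * f1 x) \<and>
           (g (fst \<omega>) = 2 \<longrightarrow> p1 * f1 x \<le> p2 * f2 x)))"

end

theory Submission
  imports Defs "HOL-Probability.Probability_Measure"
begin

text \<open>A threshold classifier with threshold \<open>t\<close> decides only where \<open>\<eta> \<notin> (1 - t, t)\<close>, and there
  it picks the larger of \<open>p\<^sub>1 f\<^sub>1\<close>, \<open>p\<^sub>2 f\<^sub>2\<close>; the minority weight is then at most \<open>1 - t\<close> times the
  total weight, so the conditional error is at most \<open>1 - t\<close> and \<open>0 \<le> R(\<gamma>) \<le> 1 - \<tau>\<^sub>\<gamma>\<close>.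
  Conversely, the indecision region lies a.s. where \<open>min(\<eta>, 1 - \<eta>) \<ge> 1 - \<tau>\<^sub>\<gamma>\<close>. If \<open>\<tau>\<^sub>\<gamma> \<le> a < 1\<close>,
  it therefore misses the event \<open>min(\<eta>, 1 - \<eta>) \<le> (1 - a)/2\<close>, whose probability \<open>\<delta>\<close> is positive
  by hypothesis, and \<open>\<gamma> \<le> 1 - \<delta>\<close>. Hence \<open>\<tau>\<^sub>\<gamma> \<rightarrow> 1\<close>, and \<open>R(\<gamma>) \<rightarrow> 0\<close> by the sandwich.\<close>


lemma minority_weight_le:
  fixes a b t :: real
  assumes "0 \<le> b" "b \<le> a" "1/2 \<le> t" "\<not> (1 - t < a / (a + b) \<and> a / (a + b) < t)"
  shows "b \<le> (1 - t) * (a + b)"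
proof (cases "a + b = 0")
  case True
  then show ?thesis using assms by simp
next
  case False
  then have pos: "0 < a + b" using assms by linarith
  have "1/2 \<le> a / (a + b)" using pos assms by (simp add: field_simps)
  then have "t \<le> a / (a + b)" using assms by linarith
  then have "t * (a + b) \<le> a" using pos by (simp add: field_simps)
  then show ?thesis by (simp add: algebra_simps)
qed

locale indecision_model =
  fixes M :: "'a measure" and f1 f2 :: "'a \<Rightarrow> real" and p1 p2 :: real
  assumes sigma_finite_M: "sigma_finite_measure M"
    and f1_measurable[measurable]: "f1 \<in> borel_measurable M"
    and f2_measurable[measurable]: "f2 \<in> borel_measurable M"
    and f1_nonneg: "\<And>x. 0 \<le> f1 x" and f2_nonneg: "\<And>x. 0 \<le> f2 x"
    and f1_normalized: "(\<integral>\<^sup>+ x. ennreal (f1 x) \<partial>M) = 1"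
    and f2_normalized: "(\<integral>\<^sup>+ x. ennreal (f2 x) \<partial>M) = 1"
    and p1_pos: "0 < p1" and p2_pos: "0 < p2" and p1_p2_sum: "p1 + p2 = 1"
begin

abbreviation J :: "(('a \<times> real) \<times> nat) measure" where
  "J \<equiv> joint M f1 f2 p1 p2"

abbreviation \<eta> :: "'a \<Rightarrow> real" where
  "\<eta> \<equiv> eta f1 f2 p1 p2"

definition weight :: "nat \<Rightarrow> 'a \<times> real \<Rightarrow> real" where
  "weight i z = indicator {0..1} (snd z) * (if i = 1 then p1 * f1 (fst z) else p2 * f2 (fst z))"

lemma weight_nonneg: "0 \<le> weight i z"
  using f1_nonneg f2_nonneg p1_pos p2_pos by (simp add: weight_def)

lemma weight_measurable[measurable]: "weight i \<in> borel_measurable (M \<Otimes>\<^sub>M lborel)"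
  unfolding weight_def by measurable

lemma joint_eq_density:
  "J = density ((M \<Otimes>\<^sub>M lborel) \<Otimes>\<^sub>M count_space {1,2}) (\<lambda>\<omega>. ennreal (weight (snd \<omega>) (fst \<omega>)))"
  unfolding joint_def weight_def by (simp add: case_prod_beta')

lemma sets_J: "sets J = sets ((M \<Otimes>\<^sub>M lborel) \<Otimes>\<^sub>M count_space {1,2})"
  unfolding joint_def by (rule sets_density)

lemma space_J: "space J = space ((M \<Otimes>\<^sub>M lborel) \<Otimes>\<^sub>M count_space {1,2})"
  unfolding joint_def by (rule space_density)

lemma nn_integral_J:
  assumes [measurable]: "h \<in> borel_measurable ((M \<Otimes>\<^sub>M lborel) \<Otimes>\<^sub>M count_space {1,2})"
  shows "(\<integral>\<^sup>+\<omega>. h \<omega> \<partial>J) =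
    (\<integral>\<^sup>+z. ennreal (weight 1 z) * h (z,1) + ennreal (weight 2 z) * h (z,2) \<partial>(M \<Otimes>\<^sub>M lborel))"
proof -
  interpret count: sigma_finite_measure "count_space {1::nat,2}"
    by (rule sigma_finite_measure_count_space_finite) simp
  have [measurable]: "(\<lambda>\<omega>. ennreal (weight (snd \<omega>) (fst \<omega>)))
      \<in> borel_measurable ((M \<Otimes>\<^sub>M lborel) \<Otimes>\<^sub>M count_space {1,2})"
    unfolding weight_def by measurable
  have weighted_h: "(\<lambda>\<omega>. ennreal (weight (snd \<omega>) (fst \<omega>)) * h \<omega>)
      \<in> borel_measurable ((M \<Otimes>\<^sub>M lborel) \<Otimes>\<^sub>M count_space {1,2})"
    by measurable
  have "(\<integral>\<^sup>+\<omega>. h \<omega> \<partial>J) = (\<integral>\<^sup>+\<omega>. ennreal (weight (snd \<omega>) (fst \<omega>)) * h \<omega>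
      \<partial>((M \<Otimes>\<^sub>M lborel) \<Otimes>\<^sub>M count_space {1,2}))"
    unfolding joint_eq_density by (rule nn_integral_density) measurable
  also have "\<dots> = (\<integral>\<^sup>+z. \<integral>\<^sup>+i. ennreal (weight i z) * h (z,i) \<partial>count_space {1,2} \<partial>(M \<Otimes>\<^sub>M lborel))"
    using count.nn_integral_fst[OF weighted_h] by simp
  finally show ?thesis
    by (simp add: nn_integral_count_space_finite)
qed

lemma emeasure_J:
  assumes "S \<in> sets J"
  shows "emeasure J S = (\<integral>\<^sup>+z. ennreal (weight 1 z * indicator S (z,1) + weight 2 z * indicator S (z,2))
    \<partial>(M \<Otimes>\<^sub>M lborel))"
proof -
  have "emeasure J S = (\<integral>\<^sup>+\<omega>. indicator S \<omega> \<partial>J)"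
    using assms by simp
  also have "\<dots> = (\<integral>\<^sup>+z. ennreal (weight 1 z) * indicator S (z,1) + ennreal (weight 2 z) * indicator S (z,2)
      \<partial>(M \<Otimes>\<^sub>M lborel))"
    using assms by (intro nn_integral_J borel_measurable_indicator) (simp add: sets_J)
  finally show ?thesis
    by (simp add: weight_nonneg ennreal_mult' ennreal_indicator)
qed

lemma indicator_section_measurable:
  assumes "S \<in> sets J" "i \<in> {1,2}"
  shows "(\<lambda>z. indicator S (z,i) :: real) \<in> borel_measurable (M \<Otimes>\<^sub>M lborel)"
proof -
  have "(\<lambda>z. (z,i)) \<in> (M \<Otimes>\<^sub>M lborel) \<rightarrow>\<^sub>M (M \<Otimes>\<^sub>M lborel) \<Otimes>\<^sub>M count_space {1,2}"
    using assms(2) by (intro measurable_Pair measurable_ident_sets measurable_const) auto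
  from measurable_compose[OF this borel_measurable_indicator[OF assms(1)[unfolded sets_J]]]
  show ?thesis .
qed

lemma prob_space_J: "prob_space J"
proof
  interpret sigma_finite_measure M by (rule sigma_finite_M)
  have mass: "(\<integral>\<^sup>+u. ennreal (weight 1 (x,u) + weight 2 (x,u)) \<partial>lborel)
      = ennreal (p1 * f1 x) + ennreal (p2 * f2 x)" for x
  proof -
    have "(\<integral>\<^sup>+u. ennreal (weight 1 (x,u) + weight 2 (x,u)) \<partial>lborel)
        = (\<integral>\<^sup>+u. ennreal (p1 * f1 x + p2 * f2 x) * indicator {0..1::real} u \<partial>lborel)"
      by (rule nn_integral_cong) (simp add: weight_def indicator_def)
    also have "\<dots> = ennreal (p1 * f1 x) + ennreal (p2 * f2 x)"
      using f1_nonneg f2_nonneg p1_pos p2_pos by (simp add: nn_integral_cmult_indicator)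
    finally show ?thesis .
  qed
  have "emeasure J (space J) = (\<integral>\<^sup>+z. ennreal (weight 1 z + weight 2 z) \<partial>(M \<Otimes>\<^sub>M lborel))"
    by (subst emeasure_J[OF sets.top]) (auto intro!: nn_integral_cong simp: space_J space_pair_measure)
  also have "\<dots> = (\<integral>\<^sup>+x. \<integral>\<^sup>+u. ennreal (weight 1 (x,u) + weight 2 (x,u)) \<partial>lborel \<partial>M)"
    by (rule lborel.nn_integral_fst[of "\<lambda>z. ennreal (weight 1 z + weight 2 z)", symmetric]) measurable
  also have "\<dots> = (\<integral>\<^sup>+x. ennreal (p1 * f1 x) + ennreal (p2 * f2 x) \<partial>M)"
    by (simp only: mass)
  also have "\<dots> = ennreal p1 * (\<integral>\<^sup>+x. ennreal (f1 x) \<partial>M) + ennreal p2 * (\<integral>\<^sup>+x. ennreal (f2 x) \<partial>M)"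
    using f1_nonneg f2_nonneg p1_pos p2_pos
    by (subst nn_integral_add) (auto simp: ennreal_mult nn_integral_cmult)
  also have "\<dots> = 1"
    using f1_normalized f2_normalized p1_pos p2_pos p1_p2_sum by (simp flip: ennreal_plus)
  finally show "emeasure J (space J) = 1" .
qed

sublocale J: prob_space J
  by (rule prob_space_J)

lemma AE_J_imp_AE_weight:
  assumes "AE \<omega> in J. P (fst \<omega>)"
  shows "AE z in M \<Otimes>\<^sub>M lborel. 0 < weight 1 z + weight 2 z \<longrightarrow> P z"
proof -
  interpret sigma_finite_measure M by (rule sigma_finite_M)
  interpret count: sigma_finite_measure "count_space {1::nat,2}"
    by (rule sigma_finite_measure_count_space_finite) simp
  interpret pair_sigma_finite "M \<Otimes>\<^sub>M lborel" "count_space {1::nat,2}"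
    by (intro pair_sigma_finite.intro sigma_finite_pair_measure sigma_finite_measure_axioms
        lborel.sigma_finite_measure_axioms count.sigma_finite_measure_axioms)
  have "AE \<omega> in (M \<Otimes>\<^sub>M lborel) \<Otimes>\<^sub>M count_space {1,2}. 0 < weight (snd \<omega>) (fst \<omega>) \<longrightarrow> P (fst \<omega>)"
    using assms unfolding joint_eq_density by (subst (asm) AE_density) (auto simp: weight_def)
  from AE_pair[OF this] show ?thesis
  proof eventually_elim
    case (elim z)
    then have "\<forall>i\<in>{1,2}. 0 < weight i z \<longrightarrow> P z"
      unfolding AE_count_space by simp
    then show ?case
      using weight_nonneg[of 1 z] weight_nonneg[of 2 z] by force
  qed
qed

lemma weight_eq_if_pos:
  assumes "0 < weight 1 z + weight 2 z"
  shows "weight 1 z = p1 * f1 (fst z)" "weight 2 z = p2 * f2 (fst z)"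
  using assms by (cases "snd z \<in> {0..1}"; simp add: weight_def)+

definition threshold_rule :: "real \<Rightarrow> ('a \<times> real \<Rightarrow> nat) \<Rightarrow> 'a \<times> real \<Rightarrow> bool" where
  "threshold_rule t g z \<longleftrightarrow> (let x = fst z; e = \<eta> x in
     ((1 - t < e \<and> e < t) \<longrightarrow> g z = 0) \<and> (g z = 0 \<longrightarrow> 1 - t \<le> e \<and> e \<le> t) \<and>
     (g z = 1 \<longrightarrow> p2 * f2 x \<le> p1 * f1 x) \<and> (g z = 2 \<longrightarrow> p1 * f1 x \<le> p2 * f2 x))"

lemma is_threshold_iff:
  "is_threshold M f1 f2 p1 p2 \<gamma> t \<longleftrightarrow> 1/2 \<le> t \<and> t \<le> 1 \<and>
     (\<exists>g. is_classifier M g \<and> indec_prob M f1 f2 p1 p2 g = \<gamma> \<and> (AE \<omega> in J. threshold_rule t g (fst \<omega>)))"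
  unfolding is_threshold_def threshold_rule_def ..

lemma error_weight_le:
  assumes rule: "0 < weight 1 z + weight 2 z \<Longrightarrow> threshold_rule t g z"
    and g: "g z \<in> {0,1,2}" and t: "1/2 \<le> t"
  shows "weight 1 z * of_bool (g z \<noteq> 1 \<and> g z \<noteq> 0) + weight 2 z * of_bool (g z \<noteq> 2 \<and> g z \<noteq> 0)
    \<le> (1 - t) * (weight 1 z * of_bool (g z \<noteq> 0) + weight 2 z * of_bool (g z \<noteq> 0))"
proof (cases "0 < weight 1 z + weight 2 z")
  case False
  then have "weight 1 z = 0" "weight 2 z = 0"
    using weight_nonneg[of 1 z] weight_nonneg[of 2 z] by linarith+
  then show ?thesis by simp
next
  case pos: True
  define a b where "a = weight 1 z" and "b = weight 2 z"
  have ab: "a = p1 * f1 (fst z)" "b = p2 * f2 (fst z)"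
    using weight_eq_if_pos[OF pos] by (simp_all add: a_def b_def)
  have e: "\<eta> (fst z) = a / (a + b)"
    by (simp add: eta_def ab)
  have indecisive: "1 - t < a / (a + b) \<and> a / (a + b) < t \<Longrightarrow> g z = 0"
    and class1: "g z = 1 \<Longrightarrow> b \<le> a" and class2: "g z = 2 \<Longrightarrow> a \<le> b"
    using rule[OF pos] unfolding threshold_rule_def Let_def e ab[symmetric] by auto
  have swap: "b / (b + a) = 1 - a / (a + b)"
    using pos by (simp add: a_def b_def field_simps)
  consider "g z = 0" | "g z = 1" | "g z = 2"
    using g by auto
  then show ?thesis
  proof cases
    case 2
    then have "b \<le> (1 - t) * (a + b)"
      using indecisive class1 t weight_nonneg[of 2 z] by (intro minority_weight_le) (auto simp: b_def)
    then show ?thesis using 2 by (simp add: a_def b_def algebra_simps)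
  next
    case 3
    then have "\<not> (1 - t < b / (b + a) \<and> b / (b + a) < t)"
      using indecisive unfolding swap by auto
    then have "a \<le> (1 - t) * (b + a)"
      using 3 class2 t weight_nonneg[of 1 z] by (intro minority_weight_le) (auto simp: a_def)
    then show ?thesis using 3 by (simp add: a_def b_def algebra_simps)
  qed simp
qed

lemma classifier_events_measurable:
  assumes "is_classifier M g"
  shows "{\<omega> \<in> space J. g (fst \<omega>) \<noteq> 0} \<in> sets J"
    and "{\<omega> \<in> space J. g (fst \<omega>) \<noteq> snd \<omega> \<and> g (fst \<omega>) \<noteq> 0} \<in> sets J"
proof -
  have [measurable]: "g \<in> measurable (M \<Otimes>\<^sub>M lborel) (count_space UNIV)"
    using assms unfolding is_classifier_def by blast
  show "{\<omega> \<in> space J. g (fst \<omega>) \<noteq> 0} \<in> sets J"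
    unfolding sets_J space_J by measurable
  have "Measurable.pred ((M \<Otimes>\<^sub>M lborel) \<Otimes>\<^sub>M count_space {1,2}) (\<lambda>\<omega>. g (fst \<omega>) \<noteq> snd \<omega> \<and> g (fst \<omega>) \<noteq> 0)"
    by (rule measurable_compose_countable'[where f="\<lambda>i \<omega>. g (fst \<omega>) \<noteq> i \<and> g (fst \<omega>) \<noteq> 0"
          and I="{1,2}"]) auto
  then show "{\<omega> \<in> space J. g (fst \<omega>) \<noteq> snd \<omega> \<and> g (fst \<omega>) \<noteq> 0} \<in> sets J"
    unfolding sets_J space_J pred_def .
qed

lemma measure_error_le:
  assumes g: "is_classifier M g" and t: "1/2 \<le> t" "t \<le> 1"
    and rule: "AE \<omega> in J. threshold_rule t g (fst \<omega>)"
  shows "measure J {\<omega> \<in> space J. g (fst \<omega>) \<noteq> snd \<omega> \<and> g (fst \<omega>) \<noteq> 0}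
    \<le> (1 - t) * measure J {\<omega> \<in> space J. g (fst \<omega>) \<noteq> 0}"
proof -
  have g_values: "\<And>z. g z \<in> {0,1,2}"
    using g unfolding is_classifier_def by blast
  define A where "A = {\<omega> \<in> space J. g (fst \<omega>) \<noteq> snd \<omega> \<and> g (fst \<omega>) \<noteq> 0}"
  define B where "B = {\<omega> \<in> space J. g (fst \<omega>) \<noteq> 0}"
  have A: "A \<in> sets J" and B: "B \<in> sets J"
    unfolding A_def B_def using classifier_events_measurable[OF g] by auto
  have "emeasure J A \<le> (\<integral>\<^sup>+z. ennreal (1 - t) *
      ennreal (weight 1 z * indicator B (z,1) + weight 2 z * indicator B (z,2)) \<partial>(M \<Otimes>\<^sub>M lborel))"
    unfolding emeasure_J[OF A]
  proof (rule nn_integral_mono_AE)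
    show "AE z in M \<Otimes>\<^sub>M lborel. ennreal (weight 1 z * indicator A (z,1) + weight 2 z * indicator A (z,2))
      \<le> ennreal (1 - t) * ennreal (weight 1 z * indicator B (z,1) + weight 2 z * indicator B (z,2))"
      using AE_J_imp_AE_weight[OF rule] AE_space
    proof eventually_elim
      case (elim z)
      then have "weight 1 z * indicator A (z,1) + weight 2 z * indicator A (z,2)
          \<le> (1 - t) * (weight 1 z * indicator B (z,1) + weight 2 z * indicator B (z,2))"
        (is "?error \<le> (1 - t) * ?decided")
        using error_weight_le[of z t g] g_values t
        by (simp add: A_def B_def space_J space_pair_measure indicator_def)
      then have "ennreal ?error \<le> ennreal ((1 - t) * ?decided)"
        by (rule ennreal_leI)
      also have "\<dots> = ennreal (1 - t) * ennreal ?decided"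
        using t by (intro ennreal_mult') simp
      finally show ?case .
    qed
  qed
  also have "\<dots> = ennreal (1 - t) * emeasure J B"
  proof -
    have [measurable]: "(\<lambda>z. indicator B (z,i) :: real) \<in> borel_measurable (M \<Otimes>\<^sub>M lborel)"
      if "i \<in> {1,2}" for i
      using indicator_section_measurable[OF B that] .
    show ?thesis
      unfolding emeasure_J[OF B] by (rule nn_integral_cmult) measurable
  qed
  finally have "ennreal (measure J A) \<le> ennreal ((1 - t) * measure J B)"
    using t by (simp add: J.emeasure_eq_measure ennreal_mult)
  then show ?thesis
    unfolding A_def B_def using t by (simp add: ennreal_le_iff)
qed

lemma risk_bounds:
  assumes "is_threshold M f1 f2 p1 p2 \<gamma> t"
  shows "0 \<le> risk M f1 f2 p1 p2 \<gamma> \<and> risk M f1 f2 p1 p2 \<gamma> \<le> 1 - t"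
proof -
  obtain g where g: "is_classifier M g" and indec: "indec_prob M f1 f2 p1 p2 g = \<gamma>"
    and rule: "AE \<omega> in J. threshold_rule t g (fst \<omega>)" and t: "1/2 \<le> t" "t \<le> 1"
    using assms unfolding is_threshold_iff by blast
  define S where "S = {cond_err M f1 f2 p1 p2 g | g. is_classifier M g \<and> indec_prob M f1 f2 p1 p2 g = \<gamma>}"
  have S_nonneg: "\<And>y. y \<in> S \<Longrightarrow> 0 \<le> y"
    unfolding S_def cond_err_def by auto
  have g_in_S: "cond_err M f1 f2 p1 p2 g \<in> S"
    unfolding S_def using g indec by blast
  have "cond_err M f1 f2 p1 p2 g \<le> 1 - t"
    using measure_error_le[OF g t rule] t unfolding cond_err_def by (simp add: divide_le_eq)
  moreover have "Inf S \<le> cond_err M f1 f2 p1 p2 g"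
    using g_in_S S_nonneg by (intro cInf_lower) (auto simp: bdd_below_def)
  moreover have "0 \<le> Inf S"
    using g_in_S S_nonneg by (intro cInf_greatest) auto
  ultimately show ?thesis
    unfolding risk_def S_def[symmetric] by linarith
qed

lemma margin_events_measurable:
  "{\<omega> \<in> space J. min (\<eta> (fst (fst \<omega>))) (1 - \<eta> (fst (fst \<omega>))) \<le> c} \<in> sets J"
  "{\<omega> \<in> space J. min (\<eta> (fst (fst \<omega>))) (1 - \<eta> (fst (fst \<omega>))) < c} \<in> sets J"
proof -
  have "(\<lambda>x. min (\<eta> x) (1 - \<eta> x)) \<in> borel_measurable M"
    unfolding eta_def by measurable
  then have margin: "(\<lambda>\<omega>. min (\<eta> (fst (fst \<omega>))) (1 - \<eta> (fst (fst \<omega>)))) \<in> borel_measurable J"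
    using measurable_compose[OF measurable_compose[OF measurable_fst measurable_fst]]
    unfolding measurable_cong_sets[OF sets_J refl] by simp
  show "{\<omega> \<in> space J. min (\<eta> (fst (fst \<omega>))) (1 - \<eta> (fst (fst \<omega>))) \<le> c} \<in> sets J"
    "{\<omega> \<in> space J. min (\<eta> (fst (fst \<omega>))) (1 - \<eta> (fst (fst \<omega>))) < c} \<in> sets J"
    using pred_le_const[OF margin, of c] pred_less_const[OF margin, of c] by (simp_all add: pred_def)
qed

lemma indecision_le_prob_margin_ge:
  assumes "is_threshold M f1 f2 p1 p2 \<gamma> t"
  shows "\<gamma> \<le> 1 - measure J {\<omega> \<in> space J. min (\<eta> (fst (fst \<omega>))) (1 - \<eta> (fst (fst \<omega>))) < 1 - t}"
proof -
  obtain g where indec: "indec_prob M f1 f2 p1 p2 g = \<gamma>"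
    and rule: "AE \<omega> in J. threshold_rule t g (fst \<omega>)"
    using assms unfolding is_threshold_iff by blast
  define C where "C = {\<omega> \<in> space J. min (\<eta> (fst (fst \<omega>))) (1 - \<eta> (fst (fst \<omega>))) < 1 - t}"
  have C: "C \<in> sets J"
    unfolding C_def by (rule margin_events_measurable)
  have "\<gamma> = measure J {\<omega> \<in> space J. g (fst \<omega>) = 0}"
    using indec unfolding indec_prob_def by simp
  also have "\<dots> \<le> measure J (space J - C)"
  proof (rule J.finite_measure_mono_AE)
    show "AE \<omega> in J. \<omega> \<in> {\<omega> \<in> space J. g (fst \<omega>) = 0} \<longrightarrow> \<omega> \<in> space J - C"
      using rule
    proof eventually_elim
      case (elim \<omega>)
      show ?case
      proof
        assume indecisive: "\<omega> \<in> {\<omega> \<in> space J. g (fst \<omega>) = 0}"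
        then have "1 - t \<le> \<eta> (fst (fst \<omega>))" "\<eta> (fst (fst \<omega>)) \<le> t"
          using elim unfolding threshold_rule_def Let_def by auto
        with indecisive show "\<omega> \<in> space J - C"
          unfolding C_def by auto
      qed
    qed
  qed (use C in auto)
  also have "\<dots> = 1 - measure J C"
    using C by (rule J.prob_compl)
  finally show ?thesis
    unfolding C_def .
qed

lemma threshold_tendsto_1:
  assumes margin: "\<And>\<epsilon>. 0 < \<epsilon> \<Longrightarrow>
      0 < measure J {\<omega> \<in> space J. min (\<eta> (fst (fst \<omega>))) (1 - \<eta> (fst (fst \<omega>))) \<le> \<epsilon>}"
    and threshold: "\<And>\<gamma>. 0 \<le> \<gamma> \<Longrightarrow> \<gamma> < 1 \<Longrightarrow> is_threshold M f1 f2 p1 p2 \<gamma> (\<tau> \<gamma>)"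
  shows "(\<tau> \<longlongrightarrow> 1) (at_left 1)"
proof (rule order_tendstoI)
  fix a :: real
  assume "1 < a"
  have "eventually (\<lambda>\<gamma>. \<gamma> \<in> {0<..<1}) (at_left (1::real))"
    by (rule eventually_at_left_real) simp
  then show "eventually (\<lambda>\<gamma>. \<tau> \<gamma> < a) (at_left 1)"
  proof eventually_elim
    case (elim \<gamma>)
    then have "is_threshold M f1 f2 p1 p2 \<gamma> (\<tau> \<gamma>)"
      by (intro threshold) auto
    then have "\<tau> \<gamma> \<le> 1"
      unfolding is_threshold_iff by blast
    with \<open>1 < a\<close> show ?case
      by linarith
  qed
next
  fix a :: real
  assume "a < 1"
  define \<delta> where "\<delta> = measure J {\<omega> \<in> space J. min (\<eta> (fst (fst \<omega>))) (1 - \<eta> (fst (fst \<omega>))) \<le> (1 - a) / 2}"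
  have "0 < \<delta>"
    unfolding \<delta>_def using \<open>a < 1\<close> by (intro margin) simp
  then have "eventually (\<lambda>\<gamma>. \<gamma> \<in> {max 0 (1 - \<delta>)<..<1}) (at_left (1::real))"
    by (intro eventually_at_left_real) simp
  then show "eventually (\<lambda>\<gamma>. a < \<tau> \<gamma>) (at_left 1)"
  proof eventually_elim
    case (elim \<gamma>)
    show "a < \<tau> \<gamma>"
    proof (rule ccontr)
      assume "\<not> a < \<tau> \<gamma>"
      then have "\<delta> \<le> measure J {\<omega> \<in> space J. min (\<eta> (fst (fst \<omega>))) (1 - \<eta> (fst (fst \<omega>))) < 1 - \<tau> \<gamma>}"
        unfolding \<delta>_def using \<open>a < 1\<close>
        by (intro J.finite_measure_mono margin_events_measurable) auto
      moreover have "\<gamma> \<le> 1 - measure J {\<omega> \<in> space J. min (\<eta> (fst (fst \<omega>))) (1 - \<eta> (fst (fst \<omega>))) < 1 - \<tau> \<gamma>}"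
        using elim by (intro indecision_le_prob_margin_ge threshold) auto
      ultimately show False
        using elim by auto
    qed
  qed
qed

lemma risk_tendsto_0:
  assumes threshold: "\<And>\<gamma>. 0 \<le> \<gamma> \<Longrightarrow> \<gamma> < 1 \<Longrightarrow> is_threshold M f1 f2 p1 p2 \<gamma> (\<tau> \<gamma>)"
    and \<tau>: "(\<tau> \<longlongrightarrow> 1) (at_left 1)"
  shows "(risk M f1 f2 p1 p2 \<longlongrightarrow> 0) (at_left 1)"
proof (rule tendsto_sandwich)
  have "eventually (\<lambda>\<gamma>. \<gamma> \<in> {0<..<1}) (at_left (1::real))"
    by (rule eventually_at_left_real) simp
  then have "eventually (\<lambda>\<gamma>. 0 \<le> risk M f1 f2 p1 p2 \<gamma> \<and> risk M f1 f2 p1 p2 \<gamma> \<le> 1 - \<tau> \<gamma>) (at_left 1)"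
  proof eventually_elim
    case (elim \<gamma>)
    then show ?case
      using risk_bounds[OF threshold[of \<gamma>]] by auto
  qed
  then show "eventually (\<lambda>\<gamma>. 0 \<le> risk M f1 f2 p1 p2 \<gamma>) (at_left 1)"
    and "eventually (\<lambda>\<gamma>. risk M f1 f2 p1 p2 \<gamma> \<le> 1 - \<tau> \<gamma>) (at_left 1)"
    by (auto elim: eventually_mono)
  show "((\<lambda>\<gamma>. 1 - \<tau> \<gamma>) \<longlongrightarrow> 0) (at_left 1)"
    using tendsto_diff[OF tendsto_const[of 1] \<tau>] by simp
qed simp

end

theorem lemma1:
  fixes M :: "'a measure" and f1 f2 :: "'a \<Rightarrow> real" and p1 p2 :: real
    and \<tau> :: "real \<Rightarrow> real"
  assumes "sigma_finite_measure M"
    and "f1 \<in> borel_measurable M" and "f2 \<in> borel_measurable M"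
    and "\<And>x. f1 x \<ge> 0" and "\<And>x. f2 x \<ge> 0"
    and "(\<integral>\<^sup>+ x. ennreal (f1 x) \<partial>M) = 1" and "(\<integral>\<^sup>+ x. ennreal (f2 x) \<partial>M) = 1"
    and "density M (\<lambda>x. ennreal (f1 x)) \<noteq> density M (\<lambda>x. ennreal (f2 x))"
    and "p1 > 0" and "p2 > 0" and "p1 + p2 = 1"
    and "\<And>\<epsilon>. \<epsilon> > 0 \<Longrightarrow>
          measure (joint M f1 f2 p1 p2)
            {\<omega> \<in> space (joint M f1 f2 p1 p2).
               min (eta f1 f2 p1 p2 (fst (fst \<omega>))) (1 - eta f1 f2 p1 p2 (fst (fst \<omega>))) \<le> \<epsilon>} > 0"
    and "\<And>\<gamma>. 0 \<le> \<gamma> \<Longrightarrow> \<gamma> < 1 \<Longrightarrow> is_threshold M f1 f2 p1 p2 \<gamma> (\<tau> \<gamma>)"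
  shows "(\<tau> \<longlongrightarrow> 1) (at_left 1) \<and> (risk M f1 f2 p1 p2 \<longlongrightarrow> 0) (at_left 1)"
proof -
  interpret indecision_model M f1 f2 p1 p2
    using assms(1-7,9-11) by (intro indecision_model.intro)
  have "(\<tau> \<longlongrightarrow> 1) (at_left 1)"
    using assms(12,13) by (rule threshold_tendsto_1)
  with risk_tendsto_0[OF assms(13)] show ?thesis
    by blast
qed

end
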